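(* Let $\mathcal F:\mathbb R^d\to\mathbb R$ satisfy: (A1) $\inf\mathcal F>-\infty$; (A2) there exist $L_{\mathcal F},c_u,c_l,R_l>0$ with $|\mathcal F(x)-\mathcal F(y)|\le L_{\mathcal F}(1+|x|+|y|)|x-y|$ for all $x,y$, $\mathcal F(x)-\mathcal F(x^* )\le c_u(1+|x|^2)$ for all $x$, and $\mathcal F(x)-\mathcal F(x^* )\ge c_l|x|^2$ for all $|x|>R_l$, where $x^*$ is a global minimizer of $\mathcal F$. Let $\alpha>0$, $K>0$ and $\mu,\hat\mu\in\mathcal P(\mathbb R^d)$ with $\int|x|^4\mu(dx)\le K$ and $\int|x|^4\hat\mu(dx)\le K$. Then $$|X^\alpha[\mu]-X^\alpha[\hat\mu]|\le C_0\,\mathcal W_1(\mu,\hat\mu),$$ where $C_0>0$ depends only on $\alpha,L_{\mathcal F},K$.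
   Context: $X^\alpha[\rho]=\int x\,\omega_\alpha(x)\rho(dx)/\int\omega_\alpha(x)\rho(dx)$ with $\omega_\alpha(x)=\exp(-\alpha\mathcal F(x))$; $\mathcal W_1$ is the $1$-Wasserstein distance with respect to the Euclidean metric. *)

theory Defs
  imports "HOL-Probability.Probability"
begin

definition prob_measures :: "'a::euclidean_space measure set" where
  "prob_measures = {\<mu>. prob_space \<mu> \<and> sets \<mu> = sets borel}"

definition couplings :: "'a::euclidean_space measure \<Rightarrow> 'a measure \<Rightarrow> ('a \<times> 'a) measure set" where
  "couplings \<mu> \<nu> = {\<pi>. prob_space \<pi> \<and> sets \<pi> = sets (borel \<Otimes>\<^sub>M borel)
                       \<and> distr \<pi> borel fst = \<mu> \<and> distr \<pi> borel snd = \<nu>}"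

definition W1 :: "'a::euclidean_space measure \<Rightarrow> 'a measure \<Rightarrow> ennreal" where
  "W1 \<mu> \<nu> = (INF \<pi>\<in>couplings \<mu> \<nu>. \<integral>\<^sup>+ z. ennreal (dist (fst z) (snd z)) \<partial>\<pi>)"

definition weight :: "real \<Rightarrow> ('a \<Rightarrow> real) \<Rightarrow> 'a \<Rightarrow> real" where
  "weight \<alpha> F x = exp (- \<alpha> * F x)"

definition consensus_point :: "real \<Rightarrow> ('a::euclidean_space \<Rightarrow> real) \<Rightarrow> 'a measure \<Rightarrow> 'a" where
  "consensus_point \<alpha> F \<rho> =
     (\<integral>x. weight \<alpha> F x *\<^sub>R x \<partial>\<rho>) /\<^sub>R (\<integral>x. weight \<alpha> F x \<partial>\<rho>)"

end

theory Submission
  imports Defs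
begin

(* The weight w = exp (- alpha F) is maximal at the minimiser, and the quadratic growth of F
   outside a ball makes w(x) (1 + |x|)^2 bounded as well. Together with the growth bound on the
   local Lipschitz constant of F, this makes w and x |-> w(x) x bounded and globally Lipschitz, so
   their integrals against mu and mu' differ by at most a constant times the transport cost of any
   coupling. The fourth-moment bound keeps the normalisation integral of w away from zero
   uniformly (Chebyshev), and a quotient of integrals whose denominators are bounded below is then
   Lipschitz with respect to W1. *)

lemma abs_exp_diff_le:
  fixes a b :: real
  shows "\<bar>exp a - exp b\<bar> \<le> max (exp a) (exp b) * \<bar>a - b\<bar>"
proof -
  have *: "exp b - exp a \<le> exp b * (b - a)" if "a \<le> b" for a b :: real
  proof -
    have "1 - (b - a) \<le> exp (a - b)"
      using exp_ge_add_one_self[of "a - b"] by linarith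
    then have "exp b * (1 - (b - a)) \<le> exp b * exp (a - b)"
      by (rule mult_left_mono) simp
    then show ?thesis
      by (simp add: exp_diff algebra_simps)
  qed
  show ?thesis
    using *[of a b] *[of b a] by (cases "a \<le> b") (auto simp: max_def abs_if)
qed

lemma bounded_local_lipschitz_imp_lipschitz:
  fixes f :: "'a::metric_space \<Rightarrow> 'b::metric_space"
  assumes bounded: "\<And>x y. dist (f x) (f y) \<le> M"
    and local: "\<And>x y. dist x y < 1 \<Longrightarrow> dist (f x) (f y) \<le> L * dist x y"
    and "0 \<le> L"
  shows "(max M L)-lipschitz_on UNIV f"
proof (rule lipschitz_onI)
  fix x y
  show "dist (f x) (f y) \<le> max M L * dist x y"
  proof (cases "dist x y < 1")
    case True
    then show ?thesis
      using local[of x y] by (metis max.cobounded2 mult_right_mono order.trans zero_le_dist)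
  next
    case False
    then have "M \<le> M * dist x y"
      using bounded[of x x] by (simp add: mult_le_cancel_left1)
    then have "dist (f x) (f y) \<le> M * dist x y"
      using bounded[of x y] by linarith
    also have "\<dots> \<le> max M L * dist x y"
      by (intro mult_right_mono) auto
    finally show ?thesis .
  qed
qed (simp add: \<open>0 \<le> L\<close> le_max_iff_disj)

lemma norm_scaleR_inverse_diff_le:
  fixes N N' :: "'a::real_normed_vector"
  assumes "0 < z0" "z0 \<le> Z" "z0 \<le> Z'" and "norm N' \<le> B"
  shows "norm (N /\<^sub>R Z - N' /\<^sub>R Z') \<le> dist N N' / z0 + B * dist Z Z' / z0\<^sup>2"
proof -
  have "0 < Z" "0 < Z'"
    using assms by linarith+
  have "inverse Z = inverse Z' + (Z' - Z) / (Z * Z')"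
    using \<open>0 < Z\<close> \<open>0 < Z'\<close> by (simp add: field_simps)
  then have "N /\<^sub>R Z - N' /\<^sub>R Z' = (N - N') /\<^sub>R Z + ((Z' - Z) / (Z * Z')) *\<^sub>R N'"
    by (simp add: scaleR_diff_right scaleR_add_left)
  also have "norm \<dots> \<le> dist N N' / Z + dist Z Z' * norm N' / (Z * Z')"
    using \<open>0 < Z\<close> \<open>0 < Z'\<close>
    by (intro order_trans[OF norm_triangle_ineq])
      (simp add: dist_norm abs_minus_commute divide_inverse_commute abs_mult)
  also have "\<dots> \<le> dist N N' / z0 + B * dist Z Z' / z0\<^sup>2"
  proof (rule add_mono)
    show "dist N N' / Z \<le> dist N N' / z0"
      using assms by (simp add: frac_le)
    have "dist Z Z' * norm N' \<le> B * dist Z Z'"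
      using assms(4) by (simp add: mult.commute mult_right_mono)
    moreover have "z0\<^sup>2 \<le> Z * Z'"
      using assms by (simp add: power2_eq_square mult_mono)
    ultimately show "dist Z Z' * norm N' / (Z * Z') \<le> B * dist Z Z' / z0\<^sup>2"
      using assms order_trans[OF norm_ge_zero assms(4)] by (intro frac_le) auto
  qed
  finally show ?thesis .
qed

lemma lipschitz_on_UNIV_borel_measurable:
  "L-lipschitz_on UNIV f \<Longrightarrow> f \<in> borel_measurable borel"
  by (intro borel_measurable_continuous_onI lipschitz_on_continuous_on)

lemma dist_integrals_le_coupling:
  fixes f :: "'a::euclidean_space \<Rightarrow> 'b::{banach, second_countable_topology}"
  assumes coupling: "\<pi> \<in> couplings \<mu> \<nu>"
    and lipschitz: "L-lipschitz_on UNIV f" and bounded: "\<And>x. norm (f x) \<le> M"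
  shows "ennreal (dist (\<integral>x. f x \<partial>\<mu>) (\<integral>x. f x \<partial>\<nu>))
           \<le> ennreal L * (\<integral>\<^sup>+z. ennreal (dist (fst z) (snd z)) \<partial>\<pi>)"
proof -
  have sets_\<pi>: "sets \<pi> = sets (borel \<Otimes>\<^sub>M borel)"
    and \<mu>: "\<mu> = distr \<pi> borel fst" and \<nu>: "\<nu> = distr \<pi> borel snd"
    using coupling unfolding couplings_def by auto
  interpret prob_space \<pi>
    using coupling unfolding couplings_def by auto
  have f: "f \<in> borel_measurable borel"
    using lipschitz by (rule lipschitz_on_UNIV_borel_measurable)
  have fst: "fst \<in> \<pi> \<rightarrow>\<^sub>M borel" and snd: "snd \<in> \<pi> \<rightarrow>\<^sub>M borel"
    using measurable_cong_sets[OF sets_\<pi> refl] by auto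
  have int_fst: "integrable \<pi> (\<lambda>z. f (fst z))" and int_snd: "integrable \<pi> (\<lambda>z. f (snd z))"
    using bounded measurable_compose[OF fst f] measurable_compose[OF snd f]
    by (auto intro: integrable_const_bound[where B=M])
  have "dist (\<integral>x. f x \<partial>\<mu>) (\<integral>x. f x \<partial>\<nu>) = norm (\<integral>z. f (fst z) - f (snd z) \<partial>\<pi>)"
    using integral_distr[OF fst f] integral_distr[OF snd f] int_fst int_snd
    by (simp add: \<mu> \<nu> dist_norm)
  then have "ennreal (dist (\<integral>x. f x \<partial>\<mu>) (\<integral>x. f x \<partial>\<nu>))
               \<le> (\<integral>\<^sup>+z. ennreal (dist (f (fst z)) (f (snd z))) \<partial>\<pi>)"
    using integral_norm_bound_ennreal[of \<pi> "\<lambda>z. f (fst z) - f (snd z)"] int_fst int_snd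
    by (simp add: dist_norm)
  also have "\<dots> \<le> (\<integral>\<^sup>+z. ennreal L * ennreal (dist (fst z) (snd z)) \<partial>\<pi>)"
    using lipschitz_onD[OF lipschitz] lipschitz_on_nonneg[OF lipschitz]
    by (intro nn_integral_mono) (simp add: ennreal_leI flip: ennreal_mult)
  also have "\<dots> = ennreal L * (\<integral>\<^sup>+z. ennreal (dist (fst z) (snd z)) \<partial>\<pi>)"
    using sets_\<pi> by (intro nn_integral_cmult) (simp add: measurable_cong_sets[OF sets_\<pi> refl])
  finally show ?thesis .
qed

lemma ennreal_le_cmult_W1I:
  assumes "0 < c"
    and "\<And>\<pi>. \<pi> \<in> couplings \<mu> \<nu> \<Longrightarrow> ennreal x \<le> ennreal c * (\<integral>\<^sup>+z. ennreal (dist (fst z) (snd z)) \<partial>\<pi>)"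
  shows "ennreal x \<le> ennreal c * W1 \<mu> \<nu>"
proof -
  have "ennreal c * ennreal (x / c) = ennreal x"
    using \<open>0 < c\<close>
    by (cases "0 \<le> x") (simp_all add: ennreal_neg divide_nonpos_pos flip: ennreal_mult)
  moreover have "ennreal (x / c) \<le> W1 \<mu> \<nu>"
    unfolding W1_def
  proof (rule INF_greatest)
    fix \<pi> assume "\<pi> \<in> couplings \<mu> \<nu>"
    then have "ennreal c * ennreal (x / c) \<le> ennreal c * (\<integral>\<^sup>+z. ennreal (dist (fst z) (snd z)) \<partial>\<pi>)"
      using assms(2) \<open>ennreal c * ennreal (x / c) = ennreal x\<close> by simp
    then show "ennreal (x / c) \<le> (\<integral>\<^sup>+z. ennreal (dist (fst z) (snd z)) \<partial>\<pi>)"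
      using \<open>0 < c\<close> by (simp add: ennreal_mult_le_mult_iff)
  qed
  ultimately show ?thesis
    by (metis mult_left_mono zero_le)
qed

lemma integrable_bounded_lipschitz:
  fixes f :: "'a::euclidean_space \<Rightarrow> 'b::{banach, second_countable_topology}"
  assumes "\<mu> \<in> prob_measures" "L-lipschitz_on UNIV f" "\<And>x. norm (f x) \<le> M"
  shows "integrable \<mu> f"
proof -
  interpret prob_space \<mu>
    using assms(1) unfolding prob_measures_def by simp
  have "f \<in> borel_measurable \<mu>"
    using assms(1) lipschitz_on_UNIV_borel_measurable[OF assms(2)]
    unfolding prob_measures_def by (simp cong: measurable_cong_sets)
  then show ?thesis
    using assms(3) by (intro integrable_const_bound[where B=M]) auto
qed

lemma norm_integral_le_bound:
  fixes f :: "'a::euclidean_space \<Rightarrow> 'b::{banach, second_countable_topology}"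
  assumes "\<mu> \<in> prob_measures" "integrable \<mu> f" "\<And>x. norm (f x) \<le> B"
  shows "norm (\<integral>x. f x \<partial>\<mu>) \<le> B"
proof -
  interpret prob_space \<mu>
    using assms(1) unfolding prob_measures_def by simp
  have "norm (\<integral>x. f x \<partial>\<mu>) \<le> (\<integral>x. norm (f x) \<partial>\<mu>)"
    by (rule integral_norm_bound)
  also have "\<dots> \<le> B"
    using assms(2,3) by (intro integral_le_const) auto
  finally show ?thesis .
qed

lemma integral_ge_half_if_fourth_moment_le:
  fixes f :: "'a::euclidean_space \<Rightarrow> real"
  assumes \<mu>: "\<mu> \<in> prob_measures" and moment: "(\<integral>\<^sup>+x. ennreal (norm x ^ 4) \<partial>\<mu>) \<le> ennreal K"
    and "0 < K" and f: "integrable \<mu> f" "\<And>x. 0 \<le> f x"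
    and "0 \<le> c" and near: "\<And>x. norm x ^ 4 \<le> 2 * K \<Longrightarrow> c \<le> f x"
  shows "c / 2 \<le> (\<integral>x. f x \<partial>\<mu>)"
proof -
  interpret prob_space \<mu>
    using \<mu> unfolding prob_measures_def by simp
  have "(\<lambda>x. norm x ^ 4) \<in> borel_measurable \<mu>"
    using \<mu> unfolding prob_measures_def by (simp cong: measurable_cong_sets)
  then have moment_int: "integrable \<mu> (\<lambda>x. norm x ^ 4)"
    using moment by (intro integrableI_nonneg) (auto simp: top.not_eq_extremum intro: le_less_trans)
  have "ennreal (\<integral>x. norm x ^ 4 \<partial>\<mu>) \<le> ennreal K"
    using moment moment_int by (simp add: nn_integral_eq_integral)
  then have moment_le: "(\<integral>x. norm x ^ 4 \<partial>\<mu>) \<le> K"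
    using \<open>0 < K\<close> by (simp add: ennreal_le_iff)
  \<comment> \<open>Chebyshev's inequality in pointwise form\<close>
  have pointwise: "c * (1 - norm x ^ 4 / (2 * K)) \<le> f x" for x
  proof (cases "norm x ^ 4 \<le> 2 * K")
    case True
    have "c * (1 - norm x ^ 4 / (2 * K)) \<le> c"
      using \<open>0 \<le> c\<close> \<open>0 < K\<close> by (intro mult_left_le) auto
    then show ?thesis
      using near[OF True] by linarith
  next
    case False
    then have "1 \<le> norm x ^ 4 / (2 * K)"
      using \<open>0 < K\<close> by (simp add: field_simps)
    then have "c * (1 - norm x ^ 4 / (2 * K)) \<le> 0"
      using \<open>0 \<le> c\<close> by (intro mult_nonneg_nonpos) auto
    then show ?thesis
      using f(2)[of x] by linarith
  qed
  have "1 / 2 \<le> 1 - (\<integral>x. norm x ^ 4 \<partial>\<mu>) / (2 * K)"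
    using moment_le \<open>0 < K\<close> by (simp add: field_simps)
  then have "c / 2 \<le> c * (1 - (\<integral>x. norm x ^ 4 \<partial>\<mu>) / (2 * K))"
    using mult_left_mono[OF _ \<open>0 \<le> c\<close>] by (metis mult.right_neutral times_divide_eq_right)
  also have "\<dots> = (\<integral>x. c * (1 - norm x ^ 4 / (2 * K)) \<partial>\<mu>)"
    using moment_int by (simp add: prob_space)
  also have "\<dots> \<le> (\<integral>x. f x \<partial>\<mu>)"
    using pointwise moment_int f(1) by (intro integral_mono) auto
  finally show ?thesis .
qed

lemma dist_integral_ratios_le_coupling:
  fixes g :: "'a::euclidean_space \<Rightarrow> 'b::{banach, second_countable_topology}"
    and w :: "'a \<Rightarrow> real"
  assumes coupling: "\<pi> \<in> couplings \<mu> \<nu>" and \<nu>: "\<nu> \<in> prob_measures"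
    and g: "Lg-lipschitz_on UNIV g" "\<And>x. norm (g x) \<le> B"
    and w: "Lw-lipschitz_on UNIV w" "\<And>x. norm (w x) \<le> M"
    and "0 < z0" "z0 \<le> (\<integral>x. w x \<partial>\<mu>)" "z0 \<le> (\<integral>x. w x \<partial>\<nu>)"
  shows "ennreal (dist ((\<integral>x. g x \<partial>\<mu>) /\<^sub>R (\<integral>x. w x \<partial>\<mu>)) ((\<integral>x. g x \<partial>\<nu>) /\<^sub>R (\<integral>x. w x \<partial>\<nu>)))
           \<le> ennreal (Lg / z0 + B * Lw / z0\<^sup>2) * (\<integral>\<^sup>+z. ennreal (dist (fst z) (snd z)) \<partial>\<pi>)"
    (is "_ \<le> _ * ?D")
proof -
  let ?N = "\<integral>x. g x \<partial>\<mu>" and ?N' = "\<integral>x. g x \<partial>\<nu>"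
  let ?Z = "\<integral>x. w x \<partial>\<mu>" and ?Z' = "\<integral>x. w x \<partial>\<nu>"
  have "norm ?N' \<le> B"
    using \<nu> integrable_bounded_lipschitz[OF \<nu> g] g(2) by (rule norm_integral_le_bound)
  then have "dist (?N /\<^sub>R ?Z) (?N' /\<^sub>R ?Z') \<le> dist ?N ?N' / z0 + B * dist ?Z ?Z' / z0\<^sup>2"
    using norm_scaleR_inverse_diff_le[OF assms(7-9)] by (simp add: dist_norm)
  then have "ennreal (dist (?N /\<^sub>R ?Z) (?N' /\<^sub>R ?Z'))
               \<le> ennreal (1 / z0 * dist ?N ?N' + B / z0\<^sup>2 * dist ?Z ?Z')"
    by (intro ennreal_leI) simp
  also have "\<dots> = ennreal (1 / z0) * ennreal (dist ?N ?N')
                   + ennreal (B / z0\<^sup>2) * ennreal (dist ?Z ?Z')"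
    using \<open>0 < z0\<close> order_trans[OF norm_ge_zero \<open>norm ?N' \<le> B\<close>]
    by (simp add: ennreal_plus flip: ennreal_mult)
  also have "\<dots> \<le> ennreal (1 / z0) * (ennreal Lg * ?D) + ennreal (B / z0\<^sup>2) * (ennreal Lw * ?D)"
    using dist_integrals_le_coupling[OF coupling g] dist_integrals_le_coupling[OF coupling w]
    by (intro add_mono mult_left_mono) auto
  also have "\<dots> = ennreal (Lg / z0 + B * Lw / z0\<^sup>2) * ?D"
  proof -
    have "0 \<le> Lg" "0 \<le> Lw" "0 \<le> B"
      using lipschitz_on_nonneg[OF g(1)] lipschitz_on_nonneg[OF w(1)]
        order_trans[OF norm_ge_zero \<open>norm ?N' \<le> B\<close>] .
    then have "ennreal (Lg / z0) = ennreal (1 / z0) * ennreal Lg"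
      and "ennreal (B * Lw / z0\<^sup>2) = ennreal (B / z0\<^sup>2) * ennreal Lw"
      using \<open>0 < z0\<close> by (simp_all flip: ennreal_mult)
    then show ?thesis
      using \<open>0 \<le> Lg\<close> \<open>0 \<le> Lw\<close> \<open>0 \<le> B\<close> \<open>0 < z0\<close>
      by (simp add: ennreal_plus distrib_right mult.assoc)
  qed
  finally show ?thesis .
qed

lemma weight_pos: "0 < weight \<alpha> F x"
  by (simp add: weight_def)

lemma integral_weight_ge:
  fixes F :: "'a::euclidean_space \<Rightarrow> real"
  assumes \<mu>: "\<mu> \<in> prob_measures" and moment: "(\<integral>\<^sup>+x. ennreal (norm x ^ 4) \<partial>\<mu>) \<le> ennreal K"
    and "0 < K" and "0 \<le> \<alpha>" and "0 \<le> cu"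
    and quadratic_upper: "\<And>x. F x - F xs \<le> cu * (1 + (norm x)\<^sup>2)"
    and "integrable \<mu> (weight \<alpha> F)"
  shows "weight \<alpha> F xs * exp (- \<alpha> * cu * (1 + sqrt (2 * K))) / 2 \<le> (\<integral>x. weight \<alpha> F x \<partial>\<mu>)"
proof (rule integral_ge_half_if_fourth_moment_le[OF \<mu> moment \<open>0 < K\<close> \<open>integrable \<mu> (weight \<alpha> F)\<close>])
  fix x :: 'a
  assume "norm x ^ 4 \<le> 2 * K"
  then have "(norm x)\<^sup>2 \<le> sqrt (2 * K)"
    by (intro real_le_rsqrt) (simp flip: power_mult)
  then have "F x - F xs \<le> cu * (1 + sqrt (2 * K))"
    using quadratic_upper[of x] \<open>0 \<le> cu\<close> by (meson add_left_mono mult_left_mono order_trans)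
  then have "\<alpha> * (F x - F xs) \<le> \<alpha> * cu * (1 + sqrt (2 * K))"
    using mult_left_mono \<open>0 \<le> \<alpha>\<close> by (fastforce simp: mult.assoc)
  then show "weight \<alpha> F xs * exp (- \<alpha> * cu * (1 + sqrt (2 * K))) \<le> weight \<alpha> F x"
    by (simp add: weight_def right_diff_distrib flip: exp_add)
qed (auto simp: weight_def)

locale consensus_objective =
  fixes F :: "'a::real_normed_vector \<Rightarrow> real" and xs :: 'a and \<alpha> LF cl Rl :: real
  assumes minimizer: "\<And>y. F xs \<le> F y"
    and growth_lipschitz: "\<And>x y. \<bar>F x - F y\<bar> \<le> LF * (1 + norm x + norm y) * norm (x - y)"
    and quadratic_lower: "\<And>x. Rl < norm x \<Longrightarrow> cl * (norm x)\<^sup>2 \<le> F x - F xs"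
    and \<alpha>_pos: "0 < \<alpha>" and LF_nonneg: "0 \<le> LF" and cl_pos: "0 < cl"
begin

text \<open>Inside the ball of radius \<open>Rl\<close> the factor \<open>(1 + Rl)\<^sup>2\<close> suffices; outside it
  \<open>exp (c s\<^sup>2) \<ge> 1 + c s\<^sup>2\<close> with \<open>c = \<alpha> cl\<close> and \<open>(1 + s)\<^sup>2 \<le> (2 + 2 / c) (1 + c s\<^sup>2)\<close> give the rest.\<close>

definition weight_decay_bound :: real where
  "weight_decay_bound = weight \<alpha> F xs * ((1 + Rl)\<^sup>2 + 2 + 2 / (\<alpha> * cl))"

lemma weight_le_minimizer: "weight \<alpha> F x \<le> weight \<alpha> F xs"
  using minimizer \<alpha>_pos by (simp add: weight_def)

lemma norm_weight_le: "norm (weight \<alpha> F x) \<le> weight \<alpha> F xs"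
  using weight_pos[of \<alpha> F x] weight_le_minimizer by simp

lemma weight_mult_sq_le: "weight \<alpha> F x * (1 + norm x)\<^sup>2 \<le> weight_decay_bound"
proof (cases "norm x \<le> Rl")
  case True
  then have "(1 + norm x)\<^sup>2 \<le> (1 + Rl)\<^sup>2"
    by (intro power_mono) auto
  then have "weight \<alpha> F x * (1 + norm x)\<^sup>2 \<le> weight \<alpha> F xs * (1 + Rl)\<^sup>2"
    using weight_le_minimizer[of x] less_imp_le[OF weight_pos[of \<alpha> F x]]
      less_imp_le[OF weight_pos[of \<alpha> F xs]]
    by (intro mult_mono) auto
  also have "\<dots> \<le> weight_decay_bound"
    unfolding weight_decay_bound_def using weight_pos[of \<alpha> F xs] \<alpha>_pos cl_pos
    by (intro mult_left_mono) auto
  finally show ?thesis .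
next
  case False
  define c where "c = \<alpha> * cl"
  define t where "t = c * (norm x)\<^sup>2"
  have "0 < c" "0 \<le> t"
    using \<alpha>_pos cl_pos by (simp_all add: c_def t_def)
  have "t \<le> \<alpha> * (F x - F xs)"
    using mult_left_mono[OF quadratic_lower less_imp_le[OF \<alpha>_pos]] False
    by (simp add: c_def t_def mult.assoc)
  then have "weight \<alpha> F x \<le> weight \<alpha> F xs * exp (- t)"
    by (simp add: weight_def right_diff_distrib flip: exp_add)
  then have "weight \<alpha> F x * (1 + t) \<le> weight \<alpha> F xs * (exp (- t) * (1 + t))"
    using \<open>0 \<le> t\<close> by (simp add: mult_right_mono mult.assoc)
  also have "\<dots> \<le> weight \<alpha> F xs"
    using exp_ge_add_one_self[of t] weight_pos[of \<alpha> F xs]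
    by (intro mult_left_le) (simp_all add: exp_minus field_simps)
  finally have decay: "weight \<alpha> F x * (1 + t) \<le> weight \<alpha> F xs" .
  have "(1 + norm x)\<^sup>2 \<le> 2 + 2 * (norm x)\<^sup>2"
    using sum_squares_bound[of 1 "norm x"] by (simp add: power2_eq_square algebra_simps)
  also have "\<dots> \<le> (2 + 2 / c) * (1 + t)"
  proof -
    have "(2 + 2 / c) * (1 + t) = 2 + 2 * (norm x)\<^sup>2 + (2 / c + 2 * t)"
      using \<open>0 < c\<close> by (simp add: t_def field_simps)
    then show ?thesis
      using \<open>0 < c\<close> \<open>0 \<le> t\<close> by simp
  qed
  finally have "weight \<alpha> F x * (1 + norm x)\<^sup>2 \<le> weight \<alpha> F x * ((2 + 2 / c) * (1 + t))"
    using weight_pos[of \<alpha> F x] by simp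
  also have "\<dots> = (2 + 2 / c) * (weight \<alpha> F x * (1 + t))"
    by simp
  also have "\<dots> \<le> (2 + 2 / c) * weight \<alpha> F xs"
    using decay \<open>0 < c\<close> by (intro mult_left_mono) auto
  also have "\<dots> \<le> weight_decay_bound"
    unfolding weight_decay_bound_def c_def using weight_pos[of \<alpha> F xs] by simp
  finally show ?thesis .
qed

lemma weight_decay_bound_pos: "0 < weight_decay_bound"
  using weight_mult_sq_le[of 0] weight_pos[of \<alpha> F 0] by simp

lemma norm_weighted_id_le: "norm (weight \<alpha> F x *\<^sub>R x) \<le> weight_decay_bound"
proof -
  have "norm x \<le> (1 + norm x)\<^sup>2"
    by (simp add: power2_eq_square algebra_simps)
  then have "weight \<alpha> F x * norm x \<le> weight \<alpha> F x * (1 + norm x)\<^sup>2"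
    using weight_pos[of \<alpha> F x] by simp
  moreover have "norm (weight \<alpha> F x *\<^sub>R x) = weight \<alpha> F x * norm x"
    using weight_pos[of \<alpha> F x] by simp
  ultimately show ?thesis
    using weight_mult_sq_le[of x] by linarith
qed

lemma abs_weight_diff_le:
  "\<bar>weight \<alpha> F x - weight \<alpha> F y\<bar>
     \<le> \<alpha> * LF * max (weight \<alpha> F x) (weight \<alpha> F y) * (1 + norm x + norm y) * norm (x - y)"
proof -
  have "\<bar>weight \<alpha> F x - weight \<alpha> F y\<bar> \<le> max (weight \<alpha> F x) (weight \<alpha> F y) * (\<alpha> * \<bar>F x - F y\<bar>)"
    using abs_exp_diff_le[of "- \<alpha> * F x" "- \<alpha> * F y"] \<alpha>_pos
    by (simp add: weight_def abs_mult abs_minus_commute right_diff_distrib[symmetric])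
  also have "\<dots> \<le> max (weight \<alpha> F x) (weight \<alpha> F y)
                    * (\<alpha> * (LF * (1 + norm x + norm y) * norm (x - y)))"
    using growth_lipschitz[of x y] \<alpha>_pos weight_pos[of \<alpha> F x]
    by (intro mult_left_mono) (auto simp: le_max_iff_disj)
  finally show ?thesis
    by (simp add: mult_ac)
qed

lemma abs_weight_diff_mult_le:
  assumes "dist x y < 1"
  shows "\<bar>weight \<alpha> F x - weight \<alpha> F y\<bar> * (1 + norm y) \<le> 4 * \<alpha> * LF * weight_decay_bound * dist x y"
proof -
  have "norm y \<le> 1 + norm x" "norm x \<le> 1 + norm y"
    using assms norm_triangle_ineq3[of x y] norm_triangle_ineq3[of y x]
    by (auto simp: dist_norm norm_minus_commute)
  \<comment> \<open>\<open>z\<close> is the point of larger weight; the other point lies within distance \<open>1\<close> of it\<close>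
  then obtain z where z: "weight \<alpha> F z = max (weight \<alpha> F x) (weight \<alpha> F y)"
    and "1 + norm x + norm y \<le> 2 * (1 + norm z)" "1 + norm y \<le> 2 * (1 + norm z)"
  proof (cases "weight \<alpha> F y \<le> weight \<alpha> F x")
    case True
    moreover have "1 + norm x + norm y \<le> 2 * (1 + norm x)" and "1 + norm y \<le> 2 * (1 + norm x)"
      using \<open>norm y \<le> 1 + norm x\<close> norm_ge_zero[of x] by (simp_all del: norm_ge_zero)
    ultimately show ?thesis
      by (intro that[of x]) (simp_all add: max_def)
  next
    case False
    moreover have "1 + norm x + norm y \<le> 2 * (1 + norm y)" and "1 + norm y \<le> 2 * (1 + norm y)"
      using \<open>norm x \<le> 1 + norm y\<close> norm_ge_zero[of y] by (simp_all del: norm_ge_zero)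
    ultimately show ?thesis
      by (intro that[of y]) (simp_all add: max_def)
  qed
  then have "(1 + norm x + norm y) * (1 + norm y) \<le> (2 * (1 + norm z)) * (2 * (1 + norm z))"
    by (intro mult_mono) auto
  also have "\<dots> = 4 * (1 + norm z)\<^sup>2"
    by (simp add: power2_eq_square algebra_simps)
  finally have "(1 + norm x + norm y) * (1 + norm y) \<le> 4 * (1 + norm z)\<^sup>2" .
  then have "weight \<alpha> F z * ((1 + norm x + norm y) * (1 + norm y))
               \<le> 4 * (weight \<alpha> F z * (1 + norm z)\<^sup>2)"
    using weight_pos[of \<alpha> F z] by (simp add: mult.left_commute)
  then have "weight \<alpha> F z * ((1 + norm x + norm y) * (1 + norm y)) \<le> 4 * weight_decay_bound"
    using weight_mult_sq_le[of z] by linarith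
  moreover have "0 \<le> \<alpha> * LF * dist x y"
    using \<alpha>_pos LF_nonneg by simp
  ultimately have "\<alpha> * LF * dist x y * (weight \<alpha> F z * ((1 + norm x + norm y) * (1 + norm y)))
                     \<le> \<alpha> * LF * dist x y * (4 * weight_decay_bound)"
    by (rule mult_left_mono)
  moreover have "\<bar>weight \<alpha> F x - weight \<alpha> F y\<bar> * (1 + norm y)
                   \<le> \<alpha> * LF * weight \<alpha> F z * (1 + norm x + norm y) * norm (x - y) * (1 + norm y)"
    using abs_weight_diff_le[of x y] z by (intro mult_right_mono) auto
  ultimately show ?thesis
    by (simp add: dist_norm mult_ac)
qed

lemma lipschitz_weight: "\<exists>L>0. L-lipschitz_on UNIV (weight \<alpha> F)"
proof (intro exI conjI)
  show "0 < max (weight \<alpha> F xs) (4 * \<alpha> * LF * weight_decay_bound)"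
    using weight_pos[of \<alpha> F xs] by (simp add: less_max_iff_disj)
  show "(max (weight \<alpha> F xs) (4 * \<alpha> * LF * weight_decay_bound))-lipschitz_on UNIV (weight \<alpha> F)"
  proof (rule bounded_local_lipschitz_imp_lipschitz)
    fix x y :: 'a
    show "dist (weight \<alpha> F x) (weight \<alpha> F y) \<le> weight \<alpha> F xs"
      using weight_le_minimizer[of x] weight_le_minimizer[of y]
        weight_pos[of \<alpha> F x] weight_pos[of \<alpha> F y]
      by (simp add: dist_real_def)
    assume "dist x y < 1"
    have "\<bar>weight \<alpha> F x - weight \<alpha> F y\<bar> \<le> \<bar>weight \<alpha> F x - weight \<alpha> F y\<bar> * (1 + norm y)"
      by (simp add: mult_le_cancel_left1)
    then show "dist (weight \<alpha> F x) (weight \<alpha> F y) \<le> 4 * \<alpha> * LF * weight_decay_bound * dist x y"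
      using abs_weight_diff_mult_le[OF \<open>dist x y < 1\<close>] by (simp add: dist_real_def)
  qed (use \<alpha>_pos LF_nonneg weight_decay_bound_pos in simp)
qed

lemma lipschitz_weighted_id: "\<exists>L>0. L-lipschitz_on UNIV (\<lambda>x. weight \<alpha> F x *\<^sub>R x)"
proof (intro exI conjI)
  show "0 < max (2 * weight_decay_bound)
                (4 * \<alpha> * LF * weight_decay_bound + weight \<alpha> F xs)"
    using weight_decay_bound_pos by (simp add: less_max_iff_disj)
  show "(max (2 * weight_decay_bound) (4 * \<alpha> * LF * weight_decay_bound + weight \<alpha> F xs))-lipschitz_on
          UNIV (\<lambda>x. weight \<alpha> F x *\<^sub>R x)"
  proof (rule bounded_local_lipschitz_imp_lipschitz)
    fix x y :: 'a
    show "dist (weight \<alpha> F x *\<^sub>R x) (weight \<alpha> F y *\<^sub>R y) \<le> 2 * weight_decay_bound"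
      using norm_weighted_id_le[of x] norm_weighted_id_le[of y]
        norm_triangle_ineq4[of "weight \<alpha> F x *\<^sub>R x" "weight \<alpha> F y *\<^sub>R y"]
      unfolding dist_norm by linarith
    assume "dist x y < 1"
    have "weight \<alpha> F x *\<^sub>R x - weight \<alpha> F y *\<^sub>R y
            = (weight \<alpha> F x - weight \<alpha> F y) *\<^sub>R y + weight \<alpha> F x *\<^sub>R (x - y)"
      by (simp add: algebra_simps)
    then have "dist (weight \<alpha> F x *\<^sub>R x) (weight \<alpha> F y *\<^sub>R y)
                 \<le> \<bar>weight \<alpha> F x - weight \<alpha> F y\<bar> * norm y + weight \<alpha> F x * dist x y"
      using norm_triangle_ineq[of "(weight \<alpha> F x - weight \<alpha> F y) *\<^sub>R y" "weight \<alpha> F x *\<^sub>R (x - y)"]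
        weight_pos[of \<alpha> F x]
      by (simp add: dist_norm)
    also have "\<dots> \<le> 4 * \<alpha> * LF * weight_decay_bound * dist x y + weight \<alpha> F xs * dist x y"
    proof (rule add_mono)
      show "\<bar>weight \<alpha> F x - weight \<alpha> F y\<bar> * norm y \<le> 4 * \<alpha> * LF * weight_decay_bound * dist x y"
        by (rule order_trans[OF mult_left_mono abs_weight_diff_mult_le[OF \<open>dist x y < 1\<close>]]) auto
      show "weight \<alpha> F x * dist x y \<le> weight \<alpha> F xs * dist x y"
        using weight_le_minimizer by (intro mult_right_mono) auto
    qed
    finally show "dist (weight \<alpha> F x *\<^sub>R x) (weight \<alpha> F y *\<^sub>R y)
                    \<le> (4 * \<alpha> * LF * weight_decay_bound + weight \<alpha> F xs) * dist x y"
      by (simp add: distrib_right)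
  qed (use \<alpha>_pos LF_nonneg weight_decay_bound_pos weight_pos[of \<alpha> F xs] in simp)
qed

end

theorem lemma3p3:
  fixes F :: "'a::euclidean_space \<Rightarrow> real"
    and xs :: 'a and LF cu cl Rl :: real
  assumes A1: "bdd_below (range F)"
    and xs_min: "\<forall>y. F xs \<le> F y"
    and pos: "LF > 0" "cu > 0" "cl > 0" "Rl > 0"
    and lip: "\<forall>x y. \<bar>F x - F y\<bar> \<le> LF * (1 + norm x + norm y) * norm (x - y)"
    and up: "\<forall>x. F x - F xs \<le> cu * (1 + (norm x)\<^sup>2)"
    and low: "\<forall>x. norm x > Rl \<longrightarrow> F x - F xs \<ge> cl * (norm x)\<^sup>2"
    and \<alpha>pos: "\<alpha> > 0" and Kpos: "K > 0"
  shows "\<exists>C0>0. \<forall>\<mu> \<mu>'. \<mu> \<in> prob_measures \<longrightarrow> \<mu>' \<in> prob_measures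
            \<longrightarrow> (\<integral>\<^sup>+ x. ennreal (norm x ^ 4) \<partial>\<mu>) \<le> ennreal K
            \<longrightarrow> (\<integral>\<^sup>+ x. ennreal (norm x ^ 4) \<partial>\<mu>') \<le> ennreal K
            \<longrightarrow> ennreal (norm (consensus_point \<alpha> F \<mu> - consensus_point \<alpha> F \<mu>'))
                  \<le> ennreal C0 * W1 \<mu> \<mu>'"
proof -
  interpret consensus_objective F xs \<alpha> LF cl Rl
    using xs_min lip low \<alpha>pos pos by unfold_locales auto
  obtain Lw Lg where "0 < Lw" "Lw-lipschitz_on UNIV (weight \<alpha> F)"
    and "0 < Lg" "Lg-lipschitz_on UNIV (\<lambda>x. weight \<alpha> F x *\<^sub>R x)"
    using lipschitz_weight lipschitz_weighted_id by blast
  define z0 where "z0 = weight \<alpha> F xs * exp (- \<alpha> * cu * (1 + sqrt (2 * K))) / 2"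
  define C0 where "C0 = Lg / z0 + weight_decay_bound * Lw / z0\<^sup>2"
  have "0 < z0"
    using weight_pos[of \<alpha> F xs] by (simp add: z0_def)
  then have "0 < C0"
    using weight_decay_bound_pos \<open>0 < Lw\<close> \<open>0 < Lg\<close> unfolding C0_def by (simp add: add_pos_pos)
  have denominator: "z0 \<le> (\<integral>x. weight \<alpha> F x \<partial>\<mu>)"
    if "\<mu> \<in> prob_measures" "(\<integral>\<^sup>+ x. ennreal (norm x ^ 4) \<partial>\<mu>) \<le> ennreal K" for \<mu>
    unfolding z0_def using \<alpha>pos pos(2) up norm_weight_le
    by (intro integral_weight_ge[OF that Kpos]
        integrable_bounded_lipschitz[OF that(1) \<open>Lw-lipschitz_on _ _\<close>]) auto
  show ?thesis
  proof (intro exI[of _ C0] conjI allI impI \<open>0 < C0\<close>)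
    fix \<mu> \<mu>' :: "'a measure"
    assume "\<mu> \<in> prob_measures" "\<mu>' \<in> prob_measures"
      "(\<integral>\<^sup>+ x. ennreal (norm x ^ 4) \<partial>\<mu>) \<le> ennreal K" "(\<integral>\<^sup>+ x. ennreal (norm x ^ 4) \<partial>\<mu>') \<le> ennreal K"
    then show "ennreal (norm (consensus_point \<alpha> F \<mu> - consensus_point \<alpha> F \<mu>'))
                 \<le> ennreal C0 * W1 \<mu> \<mu>'"
      unfolding consensus_point_def dist_norm[symmetric] C0_def
      using \<open>0 < C0\<close> \<open>0 < z0\<close> denominator \<open>Lw-lipschitz_on _ _\<close> \<open>Lg-lipschitz_on _ _\<close>
        norm_weighted_id_le norm_weight_le
      by (intro ennreal_le_cmult_W1I dist_integral_ratios_le_coupling) (auto simp: C0_def)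
  qed
qed

end
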